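(* Let $0\le\gamma<1$ and $k\in[0,1)$. Let $f=h+\overline{g}$ be harmonic in $\Omega_\gamma$, where $h,g$ are analytic in $\Omega_\gamma$ with power series $h(z)=\sum_{n=0}^\infty a_nz^n$, $g(z)=\sum_{n=1}^\infty b_nz^n$ in $\mathbb{D}$, $|h(z)|\le1$ on $\Omega_\gamma$, and $|g'(z)|\le k|h'(z)|$ for $z\in\mathbb{D}$. Then $$|a_0|^2+\sum_{n=1}^\infty(|a_n|+|b_n|)r^n\le1\quad\text{for }0\le r\le R^k_{2,\gamma}:=\frac{1+\gamma}{2+k+\gamma}.$$ The radius $R^k_{2,\gamma}$ is best possible.
   Context: For $0\le\gamma<1$, $\Omega_\gamma:=\{z\in\mathbb{C}: |z+\frac{\gamma}{1-\gamma}|<\frac{1}{1-\gamma}\}$, a disk containing the unit disk $\mathbb{D}$. *)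

theory Defs
  imports "HOL-Complex_Analysis.Complex_Analysis"
begin

definition Omega :: "real \<Rightarrow> complex set" where
  "Omega \<gamma> = ball (- complex_of_real (\<gamma> / (1 - \<gamma>))) (1 / (1 - \<gamma>))"

definition admissible ::
  "real \<Rightarrow> real \<Rightarrow> (complex \<Rightarrow> complex) \<Rightarrow> (complex \<Rightarrow> complex)
     \<Rightarrow> (nat \<Rightarrow> complex) \<Rightarrow> (nat \<Rightarrow> complex) \<Rightarrow> bool" where
  "admissible \<gamma> k h g a b \<longleftrightarrow>
     h holomorphic_on Omega \<gamma> \<and> g holomorphic_on Omega \<gamma> \<and>
     (\<forall>z\<in>ball 0 1. (\<lambda>n. a n * z ^ n) sums h z) \<and>
     b 0 = 0 \<and> (\<forall>z\<in>ball 0 1. (\<lambda>n. b n * z ^ n) sums g z) \<and>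
     (\<forall>z\<in>Omega \<gamma>. norm (h z) \<le> 1) \<and>
     (\<forall>z\<in>ball 0 1. norm (deriv g z) \<le> k * norm (deriv h z))"

definition bohr_ineq :: "(nat \<Rightarrow> complex) \<Rightarrow> (nat \<Rightarrow> complex) \<Rightarrow> real \<Rightarrow> bool" where
  "bohr_ineq a b r \<longleftrightarrow>
     summable (\<lambda>n. (norm (a (Suc n)) + norm (b (Suc n))) * r ^ Suc n) \<and>
     (norm (a 0))\<^sup>2 + (\<Sum>n. (norm (a (Suc n)) + norm (b (Suc n))) * r ^ Suc n) \<le> 1"

end

theory Submission
  imports Defs
begin

text \<open>
  Composing \<open>h\<close> with the Moebius map \<open>\<zeta> \<mapsto> (1 + \<gamma>) \<zeta> / (1 + \<gamma> \<zeta>)\<close> of the unit disc onto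
  \<open>\<Omega>\<^sub>\<gamma>\<close> gives a self-map \<open>K\<close> of the disc, whose coefficients obey Wiener's inequality
  \<open>\<bar>c\<^sub>n\<bar> \<le> 1 - \<bar>c\<^sub>0\<bar>\<^sup>2\<close>. Since \<open>h = K \<circ> \<phi>\<close> with \<open>\<phi> z = z / ((1 + \<gamma>) - \<gamma> z)\<close>, whose
  powers have nonnegative coefficients and \<open>\<Sum>\<^bsub>i\<le>n\<^esub> [z\<^sup>n] \<phi>\<^sup>i = 1 / (1 + \<gamma>)\<close>, this gives
  \<open>\<bar>a\<^sub>n\<bar> \<le> A = (1 - \<bar>a\<^sub>0\<bar>\<^sup>2) / (1 + \<gamma>)\<close>.

  Parseval's identity on circles turns \<open>\<bar>g'\<bar> \<le> k \<bar>h'\<bar>\<close> into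
  \<open>\<Sum> n\<^sup>2 \<bar>b\<^sub>n\<bar>\<^sup>2 t\<^sup>n\<^sup>-\<^sup>1 \<le> k\<^sup>2 \<Sum> n\<^sup>2 \<bar>a\<^sub>n\<bar>\<^sup>2 t\<^sup>n\<^sup>-\<^sup>1\<close>; integrating twice gives
  \<open>\<Sum> \<bar>b\<^sub>n\<bar>\<^sup>2 r\<^sup>n \<le> k\<^sup>2 A\<^sup>2 r / (1 - r)\<close>, and Cauchy-Schwarz against the weights \<open>r\<^sup>n\<close> yields
  \<open>\<Sum> (\<bar>a\<^sub>n\<bar> + \<bar>b\<^sub>n\<bar>) r\<^sup>n \<le> (1 + k) A r / (1 - r)\<close>, which is at most \<open>1 - \<bar>a\<^sub>0\<bar>\<^sup>2\<close> exactly
  for \<open>r \<le> (1 + \<gamma>) / (2 + k + \<gamma>)\<close>. The functions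
  \<open>h = (\<alpha>(1 + \<gamma>) - (1 + \<alpha>\<gamma>) z) / ((1 + \<gamma>) - (\<gamma> + \<alpha>) z)\<close>, \<open>g = k (h - \<alpha>)\<close> with
  \<open>\<alpha> \<rightarrow> 1\<close> show that the radius is sharp.
\<close>

unbundle no vec_syntax

lemma ball_subset_Omega:
  assumes "0 \<le> \<gamma>" "\<gamma> < 1"
  shows "ball 0 1 \<subseteq> Omega \<gamma>"
proof
  fix z :: complex assume "z \<in> ball 0 1"
  moreover have "norm (complex_of_real (\<gamma> / (1 - \<gamma>))) = \<gamma> / (1 - \<gamma>)"
    using assms by (simp only: norm_of_real) simp
  ultimately have "norm (- complex_of_real (\<gamma> / (1 - \<gamma>)) - z) < \<gamma> / (1 - \<gamma>) + 1"
    using norm_triangle_ineq4[of "- complex_of_real (\<gamma> / (1 - \<gamma>))" z] by (simp only: norm_minus_cancel mem_ball_0)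
  also have "\<gamma> / (1 - \<gamma>) + 1 = 1 / (1 - \<gamma>)" using assms by (simp add: field_simps)
  finally show "z \<in> Omega \<gamma>" unfolding Omega_def mem_ball dist_norm .
qed

lemma of_real_notin_Omega:
  assumes "0 \<le> \<gamma>" "\<gamma> < 1" "1 \<le> x"
  shows "complex_of_real x \<notin> Omega \<gamma>"
proof -
  have "1 - \<gamma> \<le> x * (1 - \<gamma>)" using assms by simp
  hence "1 / (1 - \<gamma>) \<le> \<bar>\<gamma> / (1 - \<gamma>) + x\<bar>"
    using assms by (simp add: field_simps)
  also have "\<bar>\<gamma> / (1 - \<gamma>) + x\<bar> = norm (- complex_of_real (\<gamma> / (1 - \<gamma>) + x))"
    by (simp only: norm_minus_cancel norm_of_real)
  also have "\<dots> = dist (- complex_of_real (\<gamma> / (1 - \<gamma>))) (of_real x)"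
    by (simp add: dist_norm)
  finally show ?thesis unfolding Omega_def by simp
qed

lemma sums_coeff_eq_higher_deriv:
  fixes f :: "complex \<Rightarrow> complex"
  assumes "\<forall>z\<in>ball 0 1. (\<lambda>n. c n * z^n) sums f z"
  shows "c n = (deriv ^^ n) f 0 / fact n"
proof -
  have ev: "eventually (\<lambda>z. z \<in> ball (0::complex) 1) (nhds 0)"
    by (rule eventually_nhds_in_open) auto
  have "f has_fps_expansion Abs_fps c"
    by (rule has_fps_expansionI) (use ev assms in \<open>auto elim!: eventually_mono\<close>)
  from fps_nth_fps_expansion[OF this, of n] show ?thesis by simp
qed

lemma higher_deriv_deriv_eq_coeff:
  fixes f :: "complex \<Rightarrow> complex"
  assumes "\<forall>z\<in>ball 0 1. (\<lambda>n. c n * z^n) sums f z"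
  shows "(deriv ^^ n) (deriv f) 0 / fact n = of_nat (Suc n) * c (Suc n)"
proof -
  have "(deriv ^^ n) (deriv f) = (deriv ^^ Suc n) f" by (simp only: funpow_Suc_right o_def)
  moreover have "(deriv ^^ Suc n) f 0 = c (Suc n) * fact (Suc n)"
    using sums_coeff_eq_higher_deriv[OF assms, of "Suc n"] by (simp del: fact_Suc)
  ultimately show ?thesis by (simp only: fact_Suc) simp
qed

section \<open>Parseval's identity on circles\<close>

text \<open>On the circle \<open>cnj z = \<rho>\<^sup>2 / z\<close>, so this is Cauchy's formula for the \<open>n\<close>-th coefficient.\<close>
lemma circlepath_coeff_integral:
  fixes f :: "complex \<Rightarrow> complex"
  assumes holf: "f holomorphic_on ball 0 1" and \<rho>: "0 < \<rho>" "\<rho> < 1"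
  shows "((\<lambda>t. f (circlepath 0 \<rho> t) * cnj (circlepath 0 \<rho> t) ^ n) has_integral
            ((deriv ^^ n) f 0 / fact n * of_real (\<rho> ^ (2*n)))) {0..1}"
proof -
  let ?g = "circlepath 0 \<rho>"
  let ?c = "of_real (\<rho>^(2*n)) / (2 * pi * \<i>) :: complex"
  have "f holomorphic_on cball 0 \<rho>" by (rule holomorphic_on_subset[OF holf]) (use \<rho> in auto)
  hence "((\<lambda>u. f u / (u - 0) ^ Suc n) has_contour_integral (2 * pi * \<i> / fact n * (deriv ^^ n) f 0)) ?g"
    using \<rho> by (intro Cauchy_has_contour_integral_higher_derivative_circlepath
        holomorphic_on_imp_continuous_on) (auto elim: holomorphic_on_subset)
  hence I: "((\<lambda>t. ?c * (f (?g t) / ?g t ^ Suc n * vector_derivative ?g (at t within {0..1})))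
          has_integral (?c * (2 * pi * \<i> / fact n * (deriv ^^ n) f 0))) {0..1}"
    unfolding has_contour_integral_def diff_zero by (rule has_integral_mult_right)
  have integral_eq: "?c * (2 * pi * \<i> / fact n * (deriv ^^ n) f 0)
      = (deriv ^^ n) f 0 / fact n * of_real (\<rho> ^ (2*n))"
    by (simp add: field_simps)
  have integrand: "?c * (f (?g t) / ?g t ^ Suc n * vector_derivative ?g (at t within {0..1}))
      = f (?g t) * cnj (?g t) ^ n" if "t \<in> {0..1}" for t
  proof -
    have gnz: "?g t \<noteq> 0" using \<rho> by (simp add: circlepath)
    have "norm (?g t) = \<rho>" using \<rho> by (simp add: circlepath norm_mult)
    hence "?g t * cnj (?g t) = of_real (\<rho>^2)" by (metis complex_norm_square)
    hence "(?g t * cnj (?g t)) ^ n = of_real (\<rho>^(2*n))" by (simp add: power_mult)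
    hence "cnj (?g t) ^ n = of_real (\<rho>^(2*n)) / ?g t ^ n"
      using gnz by (simp add: field_simps power_mult_distrib)
    moreover have "vector_derivative ?g (at t within {0..1}) = 2 * pi * \<i> * ?g t"
      using that vector_derivative_circlepath01[of t 0 \<rho>] by (simp add: circlepath)
    ultimately show ?thesis using \<rho> gnz by (simp add: field_simps)
  qed
  show ?thesis using has_integral_eq[OF integrand I] unfolding integral_eq .
qed

lemma has_integral_suminf_Weierstrass:
  fixes u :: "nat \<Rightarrow> real \<Rightarrow> 'a::banach"
  assumes bound: "\<And>i t. t \<in> {a..b} \<Longrightarrow> norm (u i t) \<le> M i" and M: "summable M"
    and cont: "\<And>i. continuous_on {a..b} (u i)"
    and int: "\<And>i. (u i has_integral I i) {a..b}"
  obtains J where "I sums J" and "((\<lambda>t. \<Sum>i. u i t) has_integral J) {a..b}"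
proof -
  have unif: "uniform_limit {a..b} (\<lambda>N t. \<Sum>i<N. u i t) (\<lambda>t. \<Sum>i. u i t) sequentially"
    using bound M by (intro Weierstrass_m_test) auto
  have "continuous_on {a..b} (\<lambda>t. \<Sum>i<N. u i t)" for N
    using cont by (intro continuous_on_sum) auto
  then obtain S J where S: "\<And>N. ((\<lambda>t. \<Sum>i<N. u i t) has_integral S N) {a..b}"
      and J: "((\<lambda>t. \<Sum>i. u i t) has_integral J) {a..b}" and lim: "S \<longlonglongrightarrow> J"
    using uniform_limit_integral[OF unif] by auto
  have "S = (\<lambda>N. \<Sum>i<N. I i)"
    using has_integral_unique[OF S has_integral_sum[OF _ int]] by auto
  hence "I sums J" using lim by (simp add: sums_def)
  thus thesis using J that by blast
qed

lemma summable_norm_coeff_mult_power: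
  fixes f :: "complex \<Rightarrow> complex"
  assumes holf: "f holomorphic_on ball 0 1" and \<rho>: "0 \<le> \<rho>" "\<rho> < 1"
  shows "summable (\<lambda>n. norm ((deriv ^^ n) f 0 / fact n) * \<rho>^n)"
proof -
  obtain \<rho>' where \<rho>': "\<rho> < \<rho>'" "\<rho>' < 1" using \<rho> dense by blast
  hence "(\<lambda>n. (deriv ^^ n) f 0 / fact n * of_real \<rho>' ^ n) sums f (of_real \<rho>')"
    using holomorphic_power_series[OF holf, of "of_real \<rho>'"] \<rho> by simp
  moreover have "norm (complex_of_real \<rho>) < norm (complex_of_real \<rho>')" using \<rho> \<rho>' by simp
  ultimately have "summable (\<lambda>n. norm ((deriv ^^ n) f 0 / fact n * of_real \<rho> ^ n))"
    by (intro powser_insidea[OF sums_summable])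
  thus ?thesis using \<rho> by (simp only: norm_mult norm_power norm_of_real abs_of_nonneg)
qed

lemma parseval_circlepath:
  fixes f :: "complex \<Rightarrow> complex"
  assumes holf: "f holomorphic_on ball 0 1" and \<rho>: "0 < \<rho>" "\<rho> < 1"
  defines "c \<equiv> \<lambda>n. (deriv ^^ n) f 0 / fact n"
  shows "summable (\<lambda>n. (norm (c n))^2 * \<rho>^(2*n))"
    and "((\<lambda>t. (norm (f (circlepath 0 \<rho> t)))^2) has_integral
          (\<Sum>n. (norm (c n))^2 * \<rho>^(2*n))) {0..1}"
proof -
  let ?g = "circlepath 0 \<rho>"
  \<comment> \<open>the terms of \<open>f \<cdot> cnj f = \<Sum>i. cnj (c i) \<cdot> f \<cdot> cnj z\<^sup>i\<close>, integrated termwise\<close>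
  define u where "u i t = cnj (c i) * (f (?g t) * cnj (?g t) ^ i)" for i t
  have g_norm: "norm (?g t) = \<rho>" for t using \<rho> by (simp add: circlepath norm_mult)
  have g_in: "?g t \<in> cball 0 \<rho>" for t using g_norm by simp
  have sums_f: "(\<lambda>n. c n * z ^ n) sums f z" if "z \<in> ball 0 1" for z
    using holomorphic_power_series[OF holf that] unfolding c_def by simp
  have contf: "continuous_on (cball 0 \<rho>) f"
    using \<rho> by (intro holomorphic_on_imp_continuous_on holomorphic_on_subset[OF holf]) auto
  then obtain B where B: "\<And>z. z \<in> cball 0 \<rho> \<Longrightarrow> norm (f z) \<le> B"
    by (metis compact_cball compact_continuous_image compact_imp_bounded bounded_iff imageI)
  have summable_bound: "summable (\<lambda>n. B * (norm (c n) * \<rho> ^ n))"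
    using summable_norm_coeff_mult_power[OF holf] \<rho> by (intro summable_mult) (simp add: c_def)
  have bound: "norm (u i t) \<le> B * (norm (c i) * \<rho> ^ i)" for i t
  proof -
    have "norm (u i t) = norm (f (?g t)) * (norm (c i) * \<rho> ^ i)"
      by (simp add: u_def norm_mult norm_power g_norm)
    also have "\<dots> \<le> B * (norm (c i) * \<rho> ^ i)"
      using B[OF g_in] \<rho> by (intro mult_right_mono) auto
    finally show ?thesis .
  qed
  have "continuous_on {0..1} (\<lambda>t. f (?g t))"
    by (rule continuous_on_compose2[OF contf]) (use g_in in \<open>auto simp: circlepath continuous_intros\<close>)
  hence cont: "continuous_on {0..1} (u i)" for i
    unfolding u_def by (intro continuous_intros) (simp_all add: circlepath continuous_intros)
  have int: "(u i has_integral of_real ((norm (c i))^2 * \<rho>^(2*i))) {0..1}" for i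
  proof -
    have "(u i has_integral cnj (c i) * (c i * of_real (\<rho> ^ (2*i)))) {0..1}"
      unfolding u_def[abs_def] c_def by (intro has_integral_mult_right circlepath_coeff_integral[OF holf \<rho>])
    moreover have "cnj (c i) * (c i * of_real (\<rho> ^ (2*i))) = of_real ((norm (c i))^2 * \<rho>^(2*i))"
      unfolding of_real_mult complex_norm_square by (simp add: mult_ac)
    ultimately show ?thesis by (simp only:)
  qed
  have "(\<Sum>i. u i t) = of_real ((norm (f (?g t)))^2)" for t
  proof -
    have "?g t \<in> ball 0 1" using g_norm \<rho> by simp
    from sums_mult[OF sums_cnj[THEN iffD2, OF sums_f[OF this]], of "f (?g t)"]
    show ?thesis unfolding complex_norm_square by (simp add: u_def mult_ac sums_iff)
  qed
  moreover obtain J where sums_J: "(\<lambda>i. complex_of_real ((norm (c i))^2 * \<rho>^(2*i))) sums J"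
      and "((\<lambda>t. \<Sum>i. u i t) has_integral J) {0..1}"
    by (rule has_integral_suminf_Weierstrass[OF bound summable_bound cont int])
  ultimately have "((\<lambda>t. complex_of_real ((norm (f (?g t)))^2)) has_integral J) {0..1}"
    by (simp only:)
  from has_integral_Re[OF this] have "((\<lambda>t. (norm (f (?g t)))^2) has_integral Re J) {0..1}"
    by (simp only: Re_complex_of_real)
  moreover have "(\<lambda>i. (norm (c i))^2 * \<rho>^(2*i)) sums Re J"
    using sums_Re[OF sums_J] by simp
  ultimately show "summable (\<lambda>n. (norm (c n))^2 * \<rho>^(2*n))"
    and "((\<lambda>t. (norm (f (?g t)))^2) has_integral (\<Sum>n. (norm (c n))^2 * \<rho>^(2*n))) {0..1}"
    by (simp_all add: sums_iff)
qed

lemma parseval_deriv_circlepath: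
  fixes f :: "complex \<Rightarrow> complex"
  assumes holf: "f holomorphic_on ball 0 1" and ser: "\<forall>z\<in>ball 0 1. (\<lambda>n. c n * z^n) sums f z"
    and t: "0 < t" "t < 1"
  shows "summable (\<lambda>n. (real (Suc n))^2 * (norm (c (Suc n)))^2 * t^n)"
    and "((\<lambda>x. (norm (deriv f (circlepath 0 (sqrt t) x)))^2) has_integral
          (\<Sum>n. (real (Suc n))^2 * (norm (c (Suc n)))^2 * t^n)) {0..1}"
proof -
  have hol: "deriv f holomorphic_on ball 0 1" by (rule holomorphic_deriv[OF holf]) auto
  have "norm ((deriv ^^ n) (deriv f) 0 / fact n) = real (Suc n) * norm (c (Suc n))" for n
    unfolding higher_deriv_deriv_eq_coeff[OF ser] by (simp only: norm_mult norm_of_nat)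
  hence "(norm ((deriv ^^ n) (deriv f) 0 / fact n))^2 * sqrt t^(2*n)
      = (real (Suc n))^2 * (norm (c (Suc n)))^2 * t^n" for n
    using t by (simp add: power_mult power_mult_distrib)
  thus "summable (\<lambda>n. (real (Suc n))^2 * (norm (c (Suc n)))^2 * t^n)"
    and "((\<lambda>x. (norm (deriv f (circlepath 0 (sqrt t) x)))^2) has_integral
          (\<Sum>n. (real (Suc n))^2 * (norm (c (Suc n)))^2 * t^n)) {0..1}"
    using parseval_circlepath[OF hol, of "sqrt t"] t by simp_all
qed

section \<open>Wiener's inequality\<close>

lemma roots_of_unity_power_sum:
  assumes "n \<ge> 1"
  defines "\<omega> \<equiv> exp (2 * of_real pi * \<i> / of_nat n)"
  shows "(\<Sum>j<n. (\<omega>^j)^m) = (if n dvd m then of_nat n else 0)"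
proof -
  have "\<omega>^m = exp (2 * of_real pi * \<i> * of_nat m / of_nat n)"
    unfolding \<omega>_def exp_of_nat_mult[symmetric] by (simp add: field_simps)
  hence "\<omega>^m = 1 \<longleftrightarrow> n dvd m" using complex_root_unity_eq_1[OF assms(1)] by simp
  moreover have "(\<omega>^m)^n = 1"
  proof -
    have "\<omega>^n = 1" unfolding \<omega>_def exp_of_nat_mult[symmetric] using assms(1) by (simp add: field_simps)
    thus ?thesis by (metis power_mult mult.commute power_one)
  qed
  moreover have "(\<Sum>j<n. (\<omega>^j)^m) = (\<Sum>j<n. (\<omega>^m)^j)" by (metis power_mult mult.commute)
  ultimately show ?thesis by (simp add: sum_gp_strict)
qed

lemma norm_moebius_le_1:
  fixes w c :: complex
  assumes "norm w \<le> 1" "norm c < 1"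
  shows "norm ((w - c) / (1 - cnj c * w)) \<le> 1"
proof -
  have "(norm (1 - cnj c * w))^2 - (norm (w - c))^2 = (1 - (norm w)^2) * (1 - (norm c)^2)"
    by (cases w; cases c) (simp only: cmod_power2; simp add: power2_eq_square algebra_simps)
  moreover have "0 \<le> (1 - (norm w)^2) * (1 - (norm c)^2)"
    using assms by (intro mult_nonneg_nonneg) (simp_all add: abs_square_le_1)
  ultimately have "(norm (w - c))^2 \<le> (norm (1 - cnj c * w))^2" by linarith
  hence le: "norm (w - c) \<le> norm (1 - cnj c * w)" by (rule power2_le_imp_le) simp
  have "norm (cnj c * w) < 1"
    using assms mult_left_le[of "norm w" "norm c"] by (simp add: norm_mult)
  hence "norm (1 - cnj c * w) > 0" by auto
  thus ?thesis using le by (simp add: norm_divide)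
qed

lemma fps_mult_nth_eq_if_vanishing_below:
  fixes f g :: "'a::comm_ring_1 fps"
  assumes "\<And>i. i < n \<Longrightarrow> f $ i = 0"
  shows "(f * g) $ n = f $ n * g $ 0"
proof -
  have "(f * g) $ n = (\<Sum>i<Suc n. f $ i * g $ (n - i))"
    by (simp add: fps_mult_nth atLeast0AtMost lessThan_Suc_atMost)
  also have "\<dots> = f $ n * g $ 0" using assms by simp
  finally show ?thesis .
qed

lemma norm_coeff_le_if_bounded_on_disc:
  fixes f :: "complex \<Rightarrow> complex"
  assumes holf: "f holomorphic_on ball 0 1" and bound: "\<And>z. z \<in> ball 0 1 \<Longrightarrow> norm (f z) \<le> B"
  shows "norm ((deriv ^^ n) f 0 / fact n) \<le> B"
proof -
  have "norm ((deriv ^^ n) f 0 / fact n) \<le> B / \<rho>^n" if \<rho>: "0 < \<rho>" "\<rho> < 1" for \<rho>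
  proof -
    have "f holomorphic_on cball 0 \<rho>" by (rule holomorphic_on_subset[OF holf]) (use \<rho> in auto)
    hence "norm ((deriv ^^ n) f 0) \<le> fact n * B / \<rho>^n"
      using \<rho> bound by (intro Cauchy_inequality holomorphic_on_imp_continuous_on)
        (auto elim: holomorphic_on_subset)
    thus ?thesis by (simp add: norm_divide field_simps)
  qed
  hence "eventually (\<lambda>\<rho>. norm ((deriv ^^ n) f 0 / fact n) \<le> B / \<rho>^n) (at_left (1::real))"
    using eventually_at_left_real[of 0 1] by (auto elim: eventually_mono)
  moreover have "((\<lambda>\<rho>. B / \<rho>^n) \<longlongrightarrow> B / 1^n) (at_left (1::real))"
    by (intro tendsto_intros) auto
  ultimately have "norm ((deriv ^^ n) f 0 / fact n) \<le> B / 1^n"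
    by (intro tendsto_le[OF trivial_limit_at_left_real _ tendsto_const])
  thus ?thesis by simp
qed

lemma has_fps_expansion_root_average:
  fixes K :: "complex \<Rightarrow> complex"
  assumes K: "K has_fps_expansion F" and n: "n \<ge> 1"
  defines "\<omega> \<equiv> exp (2 * of_real pi * \<i> / of_nat n)"
  shows "(\<lambda>\<zeta>. (1 / of_nat n) * (\<Sum>j<n. K (\<omega>^j * \<zeta>)))
           has_fps_expansion Abs_fps (\<lambda>m. if n dvd m then F $ m else 0)"
proof -
  have "(K \<circ> (\<lambda>\<zeta>. \<omega>^j * \<zeta>)) has_fps_expansion (F oo (fps_const (\<omega>^j) * fps_X))" for j
    by (rule has_fps_expansion_compose[OF K]) (auto intro!: fps_expansion_intros)
  hence "(\<lambda>\<zeta>. (1 / of_nat n) * (\<Sum>j<n. K (\<omega>^j * \<zeta>)))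
      has_fps_expansion fps_const (1 / of_nat n) * (\<Sum>j<n. F oo (fps_const (\<omega>^j) * fps_X))"
    by (intro has_fps_expansion_cmult_left has_fps_expansion_sum) (simp add: o_def)
  also have "fps_const (1 / of_nat n) * (\<Sum>j<n. F oo (fps_const (\<omega>^j) * fps_X))
      = Abs_fps (\<lambda>m. if n dvd m then F $ m else 0)"
  proof (rule fps_ext)
    fix m
    have "(fps_const (1 / of_nat n) * (\<Sum>j<n. F oo (fps_const (\<omega>^j) * fps_X))) $ m
        = (1 / of_nat n) * ((\<Sum>j<n. (\<omega>^j)^m) * F $ m)"
      by (simp add: fps_sum_nth fps_compose_linear sum_distrib_right)
    also have "\<dots> = Abs_fps (\<lambda>m. if n dvd m then F $ m else 0) $ m"
      using n unfolding \<omega>_def roots_of_unity_power_sum[OF n] by simp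
    finally show "(fps_const (1 / of_nat n) * (\<Sum>j<n. F oo (fps_const (\<omega>^j) * fps_X))) $ m
        = Abs_fps (\<lambda>m. if n dvd m then F $ m else 0) $ m" .
  qed
  finally show ?thesis .
qed

text \<open>Composing \<open>f\<close> with the disc automorphism that sends \<open>f 0\<close> to \<open>0\<close> divides the first
  nonzero coefficient after the constant term by \<open>1 - \<bar>f 0\<bar>\<^sup>2\<close>; Cauchy's estimate bounds the
  result by \<open>1\<close>.\<close>
lemma norm_coeff_le_if_gap:
  fixes f :: "complex \<Rightarrow> complex"
  assumes holf: "f holomorphic_on ball 0 1" and bound: "\<And>z. z \<in> ball 0 1 \<Longrightarrow> norm (f z) \<le> 1"
    and F: "f has_fps_expansion F" and F0: "norm (F $ 0) < 1"
    and gap: "\<And>i. 0 < i \<Longrightarrow> i < n \<Longrightarrow> F $ i = 0" and n: "n \<ge> 1"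
  shows "norm (F $ n) \<le> 1 - (norm (F $ 0))^2"
proof -
  define c where "c = F $ 0"
  have c: "norm c < 1" using F0 by (simp add: c_def)
  have "norm (cnj c * f \<zeta>) < 1" if "\<zeta> \<in> ball 0 1" for \<zeta>
    using c bound[OF that] mult_left_le[of "norm (f \<zeta>)" "norm c"] by (simp add: norm_mult)
  hence den_nz: "1 - cnj c * f \<zeta> \<noteq> 0" if "\<zeta> \<in> ball 0 1" for \<zeta> using that by force
  define M where "M \<zeta> = (f \<zeta> - c) * inverse (1 - cnj c * f \<zeta>)" for \<zeta>
  define MF where "MF = (F - fps_const c) * inverse (1 - fps_const (cnj c) * F)"
  have dpos: "1 - (norm c)^2 > 0" using c by (simp add: abs_square_less_1)
  have den0: "1 - cnj c * c = of_real (1 - (norm c)^2)"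
    unfolding of_real_diff complex_norm_square by (simp add: mult.commute)
  have "M has_fps_expansion MF"
    unfolding M_def MF_def
  proof (intro has_fps_expansion_mult has_fps_expansion_inverse has_fps_expansion_diff F
      has_fps_expansion_const has_fps_expansion_1 has_fps_expansion_cmult_left[where c = "cnj c",
        simplified fps_const_mult_apply_left])
    have "(1 - fps_const (cnj c) * F) $ 0 = of_real (1 - (norm c)^2)"
      using den0 by (simp add: c_def)
    thus "(1 - fps_const (cnj c) * F) $ 0 \<noteq> 0" using dpos by (simp only: of_real_eq_0_iff)
  qed
  hence "MF $ n = (deriv ^^ n) M 0 / fact n" by (rule fps_nth_fps_expansion)
  moreover have "norm ((deriv ^^ n) M 0 / fact n) \<le> 1"
  proof (rule norm_coeff_le_if_bounded_on_disc)
    show "M holomorphic_on ball 0 1"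
      unfolding M_def using den_nz by (intro holomorphic_intros holf) auto
    show "norm (M z) \<le> 1" if "z \<in> ball 0 1" for z
      using norm_moebius_le_1[OF bound[OF that] c] by (simp add: M_def divide_inverse)
  qed
  moreover have "MF $ n = F $ n / (1 - cnj c * c)"
  proof -
    have "(F - fps_const c) $ i = 0" if "i < n" for i
      using that gap[of i] by (cases "i = 0") (auto simp: c_def)
    hence "MF $ n = (F - fps_const c) $ n * inverse (1 - fps_const (cnj c) * F) $ 0"
      unfolding MF_def by (rule fps_mult_nth_eq_if_vanishing_below)
    thus ?thesis using n by (simp add: c_def divide_inverse)
  qed
  ultimately have "norm (F $ n / (1 - cnj c * c)) \<le> 1" by metis
  hence "norm (F $ n) \<le> 1 * (1 - (norm c)^2)"
    unfolding den0 norm_divide norm_of_real using dpos by (simp add: pos_divide_le_eq)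
  thus ?thesis by (simp add: c_def)
qed

text \<open>Averaging \<open>K\<close> over the \<open>n\<close>-th roots of unity leaves a function bounded by \<open>1\<close> whose
  coefficients vanish strictly between the indices \<open>0\<close> and \<open>n\<close>.\<close>
lemma wiener_coeff_bound_strict:
  fixes K :: "complex \<Rightarrow> complex"
  assumes holK: "K holomorphic_on ball 0 1" and bound: "\<And>z. z \<in> ball 0 1 \<Longrightarrow> norm (K z) \<le> 1"
    and K0: "norm (K 0) < 1" and n: "n \<ge> 1"
  shows "norm ((deriv ^^ n) K 0 / fact n) \<le> 1 - (norm (K 0))^2"
proof -
  define \<omega> where "\<omega> = exp (2 * of_real pi * \<i> / of_nat n)"
  define F where "F = fps_expansion K 0"
  have F: "F $ m = (deriv ^^ m) K 0 / fact m" for m by (simp add: F_def fps_expansion_def)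
  define Kn where "Kn \<zeta> = (1 / of_nat n) * (\<Sum>j<n. K (\<omega>^j * \<zeta>))" for \<zeta>
  define Fn where "Fn = Abs_fps (\<lambda>m. if n dvd m then F $ m else 0)"
  have Kn_expansion: "Kn has_fps_expansion Fn"
    unfolding Kn_def Fn_def \<omega>_def F_def
    by (intro has_fps_expansion_root_average has_fps_expansion_fps_expansion[OF _ _ holK] n) auto
  have norm_\<omega>: "norm (\<omega>^j) = 1" for j by (simp add: \<omega>_def norm_power norm_exp_eq_Re)
  have "(K \<circ> (\<lambda>\<zeta>. \<omega>^j * \<zeta>)) holomorphic_on ball 0 1" for j
    by (rule holomorphic_on_compose_gen[OF _ holK])
      (auto intro!: holomorphic_intros simp: norm_mult norm_\<omega>)
  hence holKn: "Kn holomorphic_on ball 0 1"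
    unfolding Kn_def by (intro holomorphic_intros) (simp add: o_def)
  have Kn_bound: "norm (Kn \<zeta>) \<le> 1" if "\<zeta> \<in> ball 0 1" for \<zeta>
  proof -
    have "norm (\<Sum>j<n. K (\<omega>^j * \<zeta>)) \<le> (\<Sum>j<n. 1)"
      using that by (intro sum_norm_le bound) (auto simp: norm_mult norm_\<omega>)
    thus ?thesis using n by (simp add: Kn_def norm_mult norm_divide field_simps)
  qed
  have Fn0: "Fn $ 0 = K 0" by (simp add: Fn_def F)
  have "norm (Fn $ n) \<le> 1 - (norm (Fn $ 0))^2"
    using holKn Kn_bound Kn_expansion K0 n
    by (intro norm_coeff_le_if_gap) (auto simp: Fn_def F dest: dvd_imp_le)
  thus ?thesis by (simp add: Fn0 Fn_def F)
qed

lemma wiener_coeff_bound: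
  fixes K :: "complex \<Rightarrow> complex"
  assumes holK: "K holomorphic_on ball 0 1" and bound: "\<And>z. z \<in> ball 0 1 \<Longrightarrow> norm (K z) \<le> 1"
    and n: "n \<ge> 1"
  shows "norm ((deriv ^^ n) K 0 / fact n) \<le> 1 - (norm (K 0))^2"
proof -
  define X where "X = norm ((deriv ^^ n) K 0 / fact n)"
  have K0: "norm (K 0) \<le> 1" using bound[of 0] by simp
  have "t * X \<le> 1 - t^2 * (norm (K 0))^2" if t: "0 < t" "t < 1" for t
  proof -
    have "norm ((deriv ^^ n) (\<lambda>z. of_real t * K z) 0 / fact n) \<le> 1 - (norm (of_real t * K 0))^2"
    proof (rule wiener_coeff_bound_strict)
      show "(\<lambda>z. of_real t * K z) holomorphic_on ball 0 1" by (intro holomorphic_intros holK)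
      show "norm (of_real t * K z) \<le> 1" if "z \<in> ball 0 1" for z
        using t bound[OF that] by (simp add: norm_mult mult_le_one)
      have "t * norm (K 0) \<le> t" by (rule mult_left_le) (use t K0 in auto)
      moreover have "norm (of_real t * K 0) = t * norm (K 0)" using t by (simp add: norm_mult)
      ultimately show "norm (of_real t * K 0) < 1" using t by linarith
    qed (use n in simp)
    moreover have "(deriv ^^ n) (\<lambda>z. of_real t * K z) 0 = of_real t * (deriv ^^ n) K 0"
      by (rule higher_deriv_cmult[OF holK]) auto
    ultimately show ?thesis
      using t by (simp add: X_def norm_mult norm_divide power_mult_distrib)
  qed
  hence "eventually (\<lambda>t. t * X \<le> 1 - t^2 * (norm (K 0))^2) (at_left (1::real))"
    using eventually_at_left_real[of 0 1] by (auto elim: eventually_mono)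
  moreover have "((\<lambda>t. t * X) \<longlongrightarrow> 1 * X) (at_left (1::real))"
    and "((\<lambda>t. 1 - t^2 * (norm (K 0))^2) \<longlongrightarrow> 1 - 1^2 * (norm (K 0))^2) (at_left (1::real))"
    by (intro tendsto_intros)+
  ultimately have "1 * X \<le> 1 - 1^2 * (norm (K 0))^2"
    by (intro tendsto_le[OF trivial_limit_at_left_real])
  thus ?thesis by (simp add: X_def)
qed

section \<open>Coefficients of bounded functions on \<open>\<Omega>\<^sub>\<gamma>\<close>\<close>

lemma fps_inverse_linear:
  fixes c d :: "'a::field"
  assumes "c \<noteq> 0"
  shows "inverse (fps_const c - fps_const d * fps_X) = Abs_fps (\<lambda>m. d^m / c^(Suc m))"
proof (rule fps_inverse_unique, rule fps_ext)
  fix m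
  have "(fps_const c - fps_const d * fps_X) * Abs_fps (\<lambda>m. d^m / c^(Suc m))
      = fps_const c * Abs_fps (\<lambda>m. d^m / c^(Suc m)) - fps_const d * (fps_X * Abs_fps (\<lambda>m. d^m / c^(Suc m)))"
    by (simp add: algebra_simps)
  thus "((fps_const c - fps_const d * fps_X) * Abs_fps (\<lambda>m. d^m / c^(Suc m))) $ m = 1 $ m"
    using assms by (cases m) (simp_all add: field_simps)
qed

text \<open>The Taylor series of \<open>z / ((1 + \<gamma>) - \<gamma> z)\<close>, the inverse of the map
  \<open>\<zeta> \<mapsto> (1 + \<gamma>) \<zeta> / (1 + \<gamma> \<zeta>)\<close> from the unit disc onto \<open>\<Omega>\<^sub>\<gamma>\<close>.\<close>
definition Omega_inverse_fps :: "'a::field \<Rightarrow> 'a fps" where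
  "Omega_inverse_fps \<gamma> = fps_X * inverse (fps_const (1 + \<gamma>) - fps_const \<gamma> * fps_X)"

lemma Omega_inverse_fps_nth:
  fixes \<gamma> :: "'a::field"
  assumes "1 + \<gamma> \<noteq> 0"
  shows "Omega_inverse_fps \<gamma> $ m = (if m = 0 then 0 else \<gamma>^(m-1) / (1 + \<gamma>)^m)"
  unfolding Omega_inverse_fps_def fps_inverse_linear[OF assms] by (cases m) auto

lemma Omega_inverse_fps_power_nth_of_real:
  assumes "1 + \<gamma> \<noteq> 0"
  shows "(Omega_inverse_fps (complex_of_real \<gamma>) ^ i) $ m = of_real ((Omega_inverse_fps \<gamma> ^ i) $ m)"
proof (induction i arbitrary: m)
  case (Suc i)
  have "1 + complex_of_real \<gamma> = of_real (1 + \<gamma>)" by simp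
  hence "1 + complex_of_real \<gamma> \<noteq> 0" using assms by (simp only: of_real_eq_0_iff not_False_eq_True)
  hence "Omega_inverse_fps (complex_of_real \<gamma>) $ j = of_real (Omega_inverse_fps \<gamma> $ j)" for j
    by (simp add: Omega_inverse_fps_nth assms of_real_divide)
  thus ?case by (simp only: power_Suc fps_mult_nth Suc.IH of_real_sum of_real_mult)
qed simp

lemma Omega_inverse_fps_power_nth_nonneg:
  fixes \<gamma> :: real
  assumes "0 \<le> \<gamma>"
  shows "(Omega_inverse_fps \<gamma> ^ i) $ m \<ge> 0"
proof (induction i arbitrary: m)
  case (Suc i)
  have "(Omega_inverse_fps \<gamma> ^ Suc i) $ m
      = (\<Sum>j=0..m. Omega_inverse_fps \<gamma> $ j * (Omega_inverse_fps \<gamma> ^ i) $ (m - j))"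
    by (simp add: fps_mult_nth)
  also have "\<dots> \<ge> 0"
    using assms by (intro sum_nonneg mult_nonneg_nonneg Suc.IH) (simp add: Omega_inverse_fps_nth)
  finally show ?case .
qed simp

lemma Omega_inverse_fps_power_nth_sum:
  fixes \<gamma> :: "'a::field"
  assumes \<gamma>: "1 + \<gamma> \<noteq> 0" and n: "n \<ge> 1"
  shows "(\<Sum>i=0..n. (Omega_inverse_fps \<gamma> ^ i) $ n) = 1 / (1 + \<gamma>)"
proof -
  define \<Phi> where "\<Phi> = Omega_inverse_fps \<gamma>"
  define D where "D = fps_const (1 + \<gamma>) - fps_const \<gamma> * fps_X"
  define G where "G = (Abs_fps (\<lambda>_. 1) :: 'a fps)"
  have "inverse (inverse G) = G" by (rule fps_inverse_idempotent) (simp add: G_def)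
  hence G: "G = inverse (1 - fps_X)" unfolding G_def fps_inverse_gp' by simp
  have \<Phi>0: "\<Phi> $ 0 = 0" by (simp add: \<Phi>_def Omega_inverse_fps_def)
  have "(\<Sum>i=0..n. (\<Phi> ^ i) $ n) = (G oo \<Phi>) $ n"
    by (simp add: fps_compose_nth G_def)
  also have "G oo \<Phi> = inverse (1 - \<Phi>)"
    unfolding G by (simp add: fps_inverse_compose[OF \<Phi>0] fps_compose_sub_distrib \<Phi>0)
  also have "inverse (1 - \<Phi>) = fps_const (1 / (1 + \<gamma>)) * D * G"
  proof (rule fps_inverse_unique)
    have "\<Phi> * D = fps_X"
      using \<gamma> by (simp add: \<Phi>_def D_def Omega_inverse_fps_def mult.assoc inverse_mult_eq_1)
    hence DX: "D - \<Phi> * D = fps_const (1 + \<gamma>) * (1 - fps_X)"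
      by (simp add: D_def algebra_simps fps_const_add[symmetric])
    have "(1 - \<Phi>) * (fps_const (1 / (1 + \<gamma>)) * D * G)
        = fps_const (1 / (1 + \<gamma>)) * ((D - \<Phi> * D) * G)"
      by (simp add: algebra_simps)
    also have "\<dots> = fps_const (1 / (1 + \<gamma>) * (1 + \<gamma>)) * ((1 - fps_X) * G)"
      unfolding DX by (simp only: mult.assoc fps_const_mult[symmetric])
    also have "(1 - fps_X) * G = 1" unfolding G by (rule inverse_mult_eq_1') simp
    finally show "(1 - \<Phi>) * (fps_const (1 / (1 + \<gamma>)) * D * G) = 1" using \<gamma> by simp
  qed
  also have "(fps_const (1 / (1 + \<gamma>)) * D * G) $ n = 1 / (1 + \<gamma>)"
    using n \<gamma> by (simp add: D_def G_def fps_X_mult_nth left_diff_distrib right_diff_distrib mult.assoc)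
      (simp add: diff_divide_eq_iff)
  finally show ?thesis by (simp add: \<Phi>_def)
qed

lemma moebius_disc_into_Omega:
  fixes \<zeta> :: complex
  assumes \<gamma>: "0 \<le> \<gamma>" "\<gamma> < 1" and \<zeta>: "norm \<zeta> < 1"
  shows "of_real (1 + \<gamma>) * \<zeta> / (1 + of_real \<gamma> * \<zeta>) \<in> Omega \<gamma>"
proof -
  have "(norm (1 + of_real \<gamma> * \<zeta>))^2 - (norm (\<zeta> + of_real \<gamma>))^2 = (1 - \<gamma>^2) * (1 - (norm \<zeta>)^2)"
    by (cases \<zeta>) (simp only: cmod_power2; simp add: power2_eq_square algebra_simps)
  moreover have "0 < (1 - \<gamma>^2) * (1 - (norm \<zeta>)^2)"
    using \<gamma> \<zeta> by (intro mult_pos_pos) (simp_all add: abs_square_less_1)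
  ultimately have "(norm (\<zeta> + of_real \<gamma>))^2 < (norm (1 + of_real \<gamma> * \<zeta>))^2" by linarith
  hence lt: "norm (\<zeta> + of_real \<gamma>) < norm (1 + of_real \<gamma> * \<zeta>)"
    by (rule power2_less_imp_less) simp
  hence nz: "1 + of_real \<gamma> * \<zeta> \<noteq> 0" by auto
  have "of_real (1 + \<gamma>) * \<zeta> / (1 + of_real \<gamma> * \<zeta>) + of_real (\<gamma> / (1 - \<gamma>))
      = (\<zeta> + of_real \<gamma>) / (of_real (1 - \<gamma>) * (1 + of_real \<gamma> * \<zeta>))"
    using nz \<gamma> by (simp add: field_simps of_real_divide)
  also have "norm \<dots> = norm (\<zeta> + of_real \<gamma>) / norm (1 + of_real \<gamma> * \<zeta>) / (1 - \<gamma>)"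
    using \<gamma> by (simp only: norm_divide norm_mult norm_of_real) (simp add: field_simps)
  also have "\<dots> < 1 / (1 - \<gamma>)"
    using lt nz \<gamma> by (intro divide_strict_right_mono) simp_all
  finally have lt_r: "norm (of_real (1 + \<gamma>) * \<zeta> / (1 + of_real \<gamma> * \<zeta>) + of_real (\<gamma> / (1 - \<gamma>)))
      < 1 / (1 - \<gamma>)" .
  have "dist (- a) z = norm (z + a)" for a z :: complex
    by (metis dist_norm add.commute minus_add_distrib norm_minus_cancel diff_conv_add_uminus)
  thus ?thesis unfolding Omega_def mem_ball using lt_r by (simp only:)
qed

lemma has_fps_expansion_Omega_inverse:
  fixes \<gamma> :: complex
  assumes "1 + \<gamma> \<noteq> 0"
  shows "(\<lambda>z. z * inverse ((1 + \<gamma>) - \<gamma> * z)) has_fps_expansion Omega_inverse_fps \<gamma>"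
  unfolding Omega_inverse_fps_def
  using assms by (intro has_fps_expansion_mult has_fps_expansion_inverse has_fps_expansion_diff
      has_fps_expansion_const has_fps_expansion_fps_X has_fps_expansion_cmult_left[where c = \<gamma>,
        simplified fps_const_mult_apply_left]) simp_all

lemma has_fps_expansion_Omega:
  fixes h :: "complex \<Rightarrow> complex"
  assumes \<gamma>: "0 \<le> \<gamma>" "\<gamma> < 1" and holh: "h holomorphic_on Omega \<gamma>"
  defines "K \<equiv> \<lambda>\<zeta>. h (of_real (1 + \<gamma>) * \<zeta> / (1 + of_real \<gamma> * \<zeta>))"
  shows "K holomorphic_on ball 0 1"
    and "h has_fps_expansion (fps_expansion K 0 oo Omega_inverse_fps (of_real \<gamma>))"
proof -
  have small: "norm (of_real \<gamma> * z) < 1" if "norm z < 1" for z :: complex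
    using \<gamma> that mult_left_le[of "norm z" \<gamma>] by (simp add: norm_mult)
  have "1 + of_real \<gamma> * \<zeta> \<noteq> 0" if "norm \<zeta> < 1" for \<zeta> :: complex
    using small[OF that] by (auto simp: add_eq_0_iff)
  hence "(h \<circ> (\<lambda>\<zeta>. of_real (1 + \<gamma>) * \<zeta> / (1 + of_real \<gamma> * \<zeta>))) holomorphic_on ball 0 1"
    using moebius_disc_into_Omega[OF \<gamma>]
    by (intro holomorphic_on_compose_gen[OF _ holh]) (auto intro!: holomorphic_intros)
  thus holK: "K holomorphic_on ball 0 1" by (simp add: K_def o_def)
  have one_plus: "1 + complex_of_real \<gamma> = of_real (1 + \<gamma>)" by simp
  hence one_plus_nz: "1 + complex_of_real \<gamma> \<noteq> 0" using \<gamma> by (simp only: of_real_eq_0_iff)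
  have "(K \<circ> (\<lambda>z. z * inverse ((1 + of_real \<gamma>) - of_real \<gamma> * z)))
      has_fps_expansion (fps_expansion K 0 oo Omega_inverse_fps (of_real \<gamma>))"
    by (intro has_fps_expansion_compose has_fps_expansion_fps_expansion[OF _ _ holK]
        has_fps_expansion_Omega_inverse one_plus_nz) (auto simp: Omega_inverse_fps_def)
  moreover have "eventually (\<lambda>z. z \<in> ball (0::complex) 1) (nhds 0)"
    by (rule eventually_nhds_in_open) auto
  hence ev: "eventually (\<lambda>z. (K \<circ> (\<lambda>z. z * inverse ((1 + of_real \<gamma>) - of_real \<gamma> * z))) z = h z)
      (nhds 0)"
  proof (rule eventually_mono)
    fix z :: complex assume "z \<in> ball 0 1"
    define D where "D = (1 + of_real \<gamma>) - of_real \<gamma> * z"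
    have "norm (of_real \<gamma> * z) < norm (1 + complex_of_real \<gamma>)"
      using small[of z] \<open>z \<in> ball 0 1\<close> \<gamma> unfolding one_plus norm_of_real by simp
    hence "D \<noteq> 0" by (auto simp: D_def)
    hence "1 + of_real \<gamma> * (z * inverse D) = of_real (1 + \<gamma>) * inverse D"
      by (simp add: D_def field_simps)
    hence "of_real (1 + \<gamma>) * (z * inverse D) / (1 + of_real \<gamma> * (z * inverse D)) = z"
      using \<open>D \<noteq> 0\<close> one_plus_nz by simp
    thus "(K \<circ> (\<lambda>z. z * inverse ((1 + of_real \<gamma>) - of_real \<gamma> * z))) z = h z"
      by (simp add: K_def D_def)
  qed
  ultimately show "h has_fps_expansion (fps_expansion K 0 oo Omega_inverse_fps (of_real \<gamma>))"
    using has_fps_expansion_cong[OF ev refl] by simp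
qed

lemma Omega_coeff_bound:
  fixes h :: "complex \<Rightarrow> complex"
  assumes \<gamma>: "0 \<le> \<gamma>" "\<gamma> < 1" and holh: "h holomorphic_on Omega \<gamma>"
    and bound: "\<And>z. z \<in> Omega \<gamma> \<Longrightarrow> norm (h z) \<le> 1" and n: "n \<ge> 1"
  shows "norm ((deriv ^^ n) h 0 / fact n) \<le> (1 - (norm (h 0))^2) / (1 + \<gamma>)"
proof -
  define K where "K \<zeta> = h (of_real (1 + \<gamma>) * \<zeta> / (1 + of_real \<gamma> * \<zeta>))" for \<zeta>
  define F where "F = fps_expansion K 0"
  define \<Phi> where "\<Phi> = Omega_inverse_fps \<gamma>"
  have holK: "K holomorphic_on ball 0 1"
    and expansion: "h has_fps_expansion (F oo Omega_inverse_fps (of_real \<gamma>))"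
    using has_fps_expansion_Omega[OF \<gamma> holh] unfolding K_def F_def by simp_all
  have F_bound: "norm (F $ i) \<le> 1 - (norm (h 0))^2" if "i \<ge> 1" for i
    using wiener_coeff_bound[OF holK _ that] bound moebius_disc_into_Omega[OF \<gamma>]
    by (simp add: F_def fps_expansion_def K_def)
  have "(deriv ^^ n) h 0 / fact n = (F oo Omega_inverse_fps (of_real \<gamma>)) $ n"
    by (rule fps_nth_fps_expansion[OF expansion, symmetric])
  also have "\<dots> = (\<Sum>i=0..n. F $ i * of_real ((\<Phi> ^ i) $ n))"
    using \<gamma> by (simp add: fps_compose_nth \<Phi>_def Omega_inverse_fps_power_nth_of_real)
  finally have "norm ((deriv ^^ n) h 0 / fact n) \<le> (\<Sum>i=0..n. norm (F $ i * of_real ((\<Phi> ^ i) $ n)))"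
    by (simp only: norm_sum)
  also have "\<dots> = (\<Sum>i=0..n. norm (F $ i) * (\<Phi> ^ i) $ n)"
    using Omega_inverse_fps_power_nth_nonneg[OF \<gamma>(1)] by (simp add: \<Phi>_def norm_mult)
  also have "\<dots> \<le> (\<Sum>i=0..n. (1 - (norm (h 0))^2) * (\<Phi> ^ i) $ n)"
  proof (rule sum_mono)
    fix i assume "i \<in> {0..n}"
    show "norm (F $ i) * (\<Phi> ^ i) $ n \<le> (1 - (norm (h 0))^2) * (\<Phi> ^ i) $ n"
      using n F_bound[of i] Omega_inverse_fps_power_nth_nonneg[OF \<gamma>(1), of i n]
      by (cases "i = 0") (auto simp: \<Phi>_def intro: mult_right_mono)
  qed
  also have "\<dots> = (1 - (norm (h 0))^2) / (1 + \<gamma>)"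
    using \<gamma> n by (simp add: \<Phi>_def Omega_inverse_fps_power_nth_sum flip: sum_distrib_left)
  finally show ?thesis .
qed

section \<open>Comparing coefficients through derivatives\<close>

lemma power_series_nonpos_if_deriv_nonpos:
  fixes c :: "nat \<Rightarrow> real"
  assumes summable: "\<And>x. x \<in> {-1<..<1} \<Longrightarrow> summable (\<lambda>n. c n * real (Suc n) * x^n)"
    and deriv_nonpos: "\<And>x. 0 \<le> x \<Longrightarrow> x < 1 \<Longrightarrow> (\<Sum>n. c n * real (Suc n) * x^n) \<le> 0"
    and t: "0 \<le> t" "t < 1"
  shows "(\<Sum>n. c n * t^(Suc n)) \<le> 0"
proof -
  have "(\<Sum>n. c n * t^(Suc n)) \<le> (\<Sum>n. c n * 0^(Suc n))"
  proof (rule DERIV_nonpos_imp_nonincreasing[OF t(1)])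
    fix x assume x: "0 \<le> x" "x \<le> t"
    have "DERIV (\<lambda>x. \<Sum>n. c n * x^(Suc n)) x :> (\<Sum>n. c n * real (Suc n) * x^n)"
      by (rule DERIV_power_series'[OF summable]) (use x t in auto)
    thus "\<exists>d. DERIV (\<lambda>x. \<Sum>n. c n * x^(Suc n)) x :> d \<and> d \<le> 0"
      using x t deriv_nonpos[of x] by auto
  qed
  thus ?thesis by simp
qed

text \<open>The weighted series is \<open>(u Q')'\<close> for \<open>Q u = \<Sum>n. y n * u^(n+1)\<close>, so the
  previous lemma applies twice: first to \<open>u Q'\<close>, then to \<open>Q\<close>.\<close>
lemma power_series_nonpos_if_weighted_nonpos:
  fixes y :: "nat \<Rightarrow> real"
  assumes summable: "\<And>t. 0 \<le> t \<Longrightarrow> t < 1 \<Longrightarrow> summable (\<lambda>n. \<bar>y n\<bar> * real (Suc n)^2 * t^n)"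
    and weighted_nonpos: "\<And>t. 0 \<le> t \<Longrightarrow> t < 1 \<Longrightarrow> (\<Sum>n. y n * real (Suc n)^2 * t^n) \<le> 0"
    and t: "0 \<le> t" "t < 1"
  shows "(\<Sum>n. y n * t^(Suc n)) \<le> 0"
proof (rule power_series_nonpos_if_deriv_nonpos[OF _ _ t])
  have abs_summable: "summable (\<lambda>n. \<bar>y n\<bar> * real (Suc n)^p * \<bar>x\<bar>^n)" if "x \<in> {-1<..<1}" "p \<le> 2" for x p
  proof (rule summable_comparison_test'[OF summable[of "\<bar>x\<bar>"]])
    show "norm (\<bar>y n\<bar> * real (Suc n)^p * \<bar>x\<bar>^n) \<le> \<bar>y n\<bar> * real (Suc n)^2 * \<bar>x\<bar>^n" for n
      using that by (auto intro!: mult_right_mono mult_left_mono power_increasing)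
  qed (use that in auto)
  show summable1: "summable (\<lambda>n. y n * real (Suc n) * x^n)" if "x \<in> {-1<..<1}" for x
  proof (rule summable_comparison_test'[OF abs_summable[OF that, of 1]])
    show "norm (y n * real (Suc n) * x^n) \<le> \<bar>y n\<bar> * real (Suc n)^1 * \<bar>x\<bar>^n" for n
      by (simp add: abs_mult power_abs)
  qed simp
  fix x :: real assume x: "0 \<le> x" "x < 1"
  have "(\<Sum>n. (y n * real (Suc n)) * x^(Suc n)) \<le> 0"
  proof (rule power_series_nonpos_if_deriv_nonpos[OF _ _ x])
    show "summable (\<lambda>n. y n * real (Suc n) * real (Suc n) * u^n)" if "u \<in> {-1<..<1}" for u
    proof (rule summable_comparison_test'[OF abs_summable[OF that, of 2]])
      show "norm (y n * real (Suc n) * real (Suc n) * u^n) \<le> \<bar>y n\<bar> * real (Suc n)^2 * \<bar>u\<bar>^n" for n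
        by (simp add: abs_mult power_abs power2_eq_square)
    qed simp
    show "(\<Sum>n. y n * real (Suc n) * real (Suc n) * u^n) \<le> 0" if "0 \<le> u" "u < 1" for u
      using weighted_nonpos[OF that] by (simp add: power2_eq_square mult.assoc)
  qed
  moreover have "(\<Sum>n. (y n * real (Suc n)) * x^(Suc n)) = x * (\<Sum>n. y n * real (Suc n) * x^n)"
    using suminf_mult[OF summable1, of x] x by (simp add: mult_ac)
  ultimately show "(\<Sum>n. y n * real (Suc n) * x^n) \<le> 0"
    using x weighted_nonpos[of 0] by (cases "x = 0") (simp_all add: mult_le_0_iff)
qed

lemma summable_coeff_square:
  fixes f :: "complex \<Rightarrow> complex"
  assumes holf: "f holomorphic_on ball 0 1" and sums_f: "\<forall>z\<in>ball 0 1. (\<lambda>n. c n * z^n) sums f z"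
    and r: "0 \<le> r" "r < 1"
  shows "summable (\<lambda>n. (norm (c (Suc n)))^2 * r^(Suc n))"
proof (cases "r = 0")
  case False
  hence "summable (\<lambda>n. (norm (c n))^2 * sqrt r^(2*n))"
    using parseval_circlepath(1)[OF holf, of "sqrt r"] r sums_coeff_eq_higher_deriv[OF sums_f]
    by simp
  thus ?thesis
    using r summable_Suc_iff[where f = "\<lambda>n. (norm (c n))^2 * r^n"] by (simp add: power_mult)
qed simp

lemma deriv_coeff_square_sum_le:
  fixes h g :: "complex \<Rightarrow> complex"
  assumes holh: "h holomorphic_on ball 0 1" and holg: "g holomorphic_on ball 0 1"
    and sums_h: "\<forall>z\<in>ball 0 1. (\<lambda>n. a n * z^n) sums h z"
    and sums_g: "\<forall>z\<in>ball 0 1. (\<lambda>n. b n * z^n) sums g z"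
    and deriv_le: "\<forall>z\<in>ball 0 1. norm (deriv g z) \<le> k * norm (deriv h z)"
    and t: "0 < t" "t < 1"
  shows "(\<Sum>n. (real (Suc n))^2 * (norm (b (Suc n)))^2 * t^n)
           \<le> k^2 * (\<Sum>n. (real (Suc n))^2 * (norm (a (Suc n)))^2 * t^n)"
proof -
  let ?z = "circlepath 0 (sqrt t)"
  have "((\<lambda>x. k^2 * (norm (deriv h (?z x)))^2) has_integral
          k^2 * (\<Sum>n. (real (Suc n))^2 * (norm (a (Suc n)))^2 * t^n)) {0..1}"
    using parseval_deriv_circlepath(2)[OF holh sums_h t] by (rule has_integral_mult_right)
  moreover have "(norm (deriv g (?z x)))^2 \<le> k^2 * (norm (deriv h (?z x)))^2" for x
  proof -
    have "?z x \<in> ball 0 1" using t by (simp add: circlepath norm_mult)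
    hence "norm (deriv g (?z x)) \<le> k * norm (deriv h (?z x))" using deriv_le by blast
    from power_mono[OF this norm_ge_zero, of 2] show ?thesis by (simp add: power_mult_distrib)
  qed
  ultimately show ?thesis
    using parseval_deriv_circlepath(2)[OF holg sums_g t] by (rule has_integral_le[rotated])
qed

lemma deriv_coeff_square_diff_nonpos:
  fixes h g :: "complex \<Rightarrow> complex"
  assumes holh: "h holomorphic_on ball 0 1" and holg: "g holomorphic_on ball 0 1"
    and sums_h: "\<forall>z\<in>ball 0 1. (\<lambda>n. a n * z^n) sums h z"
    and sums_g: "\<forall>z\<in>ball 0 1. (\<lambda>n. b n * z^n) sums g z"
    and deriv_le: "\<forall>z\<in>ball 0 1. norm (deriv g z) \<le> k * norm (deriv h z)"
    and t: "0 \<le> t" "t < 1"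
  defines "y \<equiv> \<lambda>n. (norm (b (Suc n)))^2 - k^2 * (norm (a (Suc n)))^2"
  shows "summable (\<lambda>n. \<bar>y n\<bar> * real (Suc n)^2 * t^n)"
    and "(\<Sum>n. y n * real (Suc n)^2 * t^n) \<le> 0"
proof -
  let ?\<alpha> = "\<lambda>n. (real (Suc n))^2 * (norm (a (Suc n)))^2 * t^n"
  let ?\<beta> = "\<lambda>n. (real (Suc n))^2 * (norm (b (Suc n)))^2 * t^n"
  have "summable (\<lambda>n. \<bar>y n\<bar> * real (Suc n)^2 * t^n) \<and> (\<Sum>n. y n * real (Suc n)^2 * t^n) \<le> 0"
  proof (cases "t = 0")
    case True
    have "norm (b 1) \<le> k * norm (a 1)"
      using deriv_le[rule_format, of 0] higher_deriv_deriv_eq_coeff[OF sums_g, of 0]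
        higher_deriv_deriv_eq_coeff[OF sums_h, of 0] by simp
    from power_mono[OF this norm_ge_zero, of 2] True show ?thesis
      by (simp add: y_def power_mult_distrib)
  next
    case False
    with t have "0 < t" by simp
    note sa = parseval_deriv_circlepath(1)[OF holh sums_h this t(2)]
      and sb = parseval_deriv_circlepath(1)[OF holg sums_g this t(2)]
    have "summable (\<lambda>n. ?\<beta> n + k^2 * ?\<alpha> n)" by (intro summable_add summable_mult sa sb)
    hence summable_y: "summable (\<lambda>n. \<bar>y n\<bar> * real (Suc n)^2 * t^n)"
    proof (rule summable_comparison_test'[where N = 0])
      fix n
      have "\<bar>y n\<bar> \<le> (norm (b (Suc n)))^2 + k^2 * (norm (a (Suc n)))^2"
        unfolding y_def by (simp add: abs_le_iff)
      from mult_right_mono[OF this, of "real (Suc n)^2 * t^n"]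
      show "norm (\<bar>y n\<bar> * real (Suc n)^2 * t^n) \<le> ?\<beta> n + k^2 * ?\<alpha> n"
        using t by (simp add: algebra_simps)
    qed
    have "(\<Sum>n. y n * real (Suc n)^2 * t^n) = (\<Sum>n. ?\<beta> n - k^2 * ?\<alpha> n)"
      by (rule suminf_cong) (simp add: y_def algebra_simps)
    also have "\<dots> = (\<Sum>n. ?\<beta> n) - k^2 * (\<Sum>n. ?\<alpha> n)"
      using suminf_diff[OF sb summable_mult[OF sa, of "k^2"]] suminf_mult[OF sa, of "k^2"] by simp
    finally have "(\<Sum>n. y n * real (Suc n)^2 * t^n) \<le> 0"
      using \<open>0 < t\<close> t deriv_coeff_square_sum_le[OF holh holg sums_h sums_g deriv_le] by simp
    with summable_y show ?thesis by blast
  qed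
  thus "summable (\<lambda>n. \<bar>y n\<bar> * real (Suc n)^2 * t^n)" and "(\<Sum>n. y n * real (Suc n)^2 * t^n) \<le> 0"
    by auto
qed

lemma coeff_square_sum_le_if_deriv_le:
  fixes h g :: "complex \<Rightarrow> complex"
  assumes holh: "h holomorphic_on ball 0 1" and holg: "g holomorphic_on ball 0 1"
    and sums_h: "\<forall>z\<in>ball 0 1. (\<lambda>n. a n * z^n) sums h z"
    and sums_g: "\<forall>z\<in>ball 0 1. (\<lambda>n. b n * z^n) sums g z"
    and deriv_le: "\<forall>z\<in>ball 0 1. norm (deriv g z) \<le> k * norm (deriv h z)"
    and r: "0 \<le> r" "r < 1"
  shows "(\<Sum>n. (norm (b (Suc n)))^2 * r^(Suc n)) \<le> k^2 * (\<Sum>n. (norm (a (Suc n)))^2 * r^(Suc n))"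
proof -
  define y where "y n = (norm (b (Suc n)))^2 - k^2 * (norm (a (Suc n)))^2" for n
  note diff_nonpos = deriv_coeff_square_diff_nonpos[OF holh holg sums_h sums_g deriv_le]
  have "(\<Sum>n. y n * r^(Suc n)) \<le> 0"
    using diff_nonpos unfolding y_def by (rule power_series_nonpos_if_weighted_nonpos[OF _ _ r])
  moreover note sa = summable_coeff_square[OF holh sums_h r] and sb = summable_coeff_square[OF holg sums_g r]
  have "(\<Sum>n. y n * r^(Suc n))
      = (\<Sum>n. (norm (b (Suc n)))^2 * r^(Suc n) - k^2 * ((norm (a (Suc n)))^2 * r^(Suc n)))"
    by (rule suminf_cong) (simp add: y_def algebra_simps)
  ultimately show ?thesis
    using suminf_diff[OF sb summable_mult[OF sa, of "k^2"]] suminf_mult[OF sa, of "k^2"] by simp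
qed

section \<open>The Bohr inequality\<close>

lemma suminf_le_if_suminf_square_le:
  fixes x w :: "nat \<Rightarrow> real"
  assumes x: "\<And>n. 0 \<le> x n" and w: "\<And>n. 0 \<le> w n" and sums_w: "w sums T"
    and summable_sq: "summable (\<lambda>n. (x n)^2 * w n)"
    and sq_le: "(\<Sum>n. (x n)^2 * w n) \<le> M^2 * T" and M: "0 \<le> M"
  shows "summable (\<lambda>n. x n * w n)" and "(\<Sum>n. x n * w n) \<le> M * T"
proof -
  have amgm: "x n * w n \<le> ((x n)^2 * w n / e + e * w n) / 2" if "0 < e" for e n
  proof -
    have "0 \<le> (x n - e)^2 * w n" using w by simp
    thus ?thesis using that by (simp add: field_simps power2_eq_square)
  qed
  have summable_amgm: "summable (\<lambda>n. ((x n)^2 * w n / e + e * w n) / 2)" for e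
    using summable_sq sums_summable[OF sums_w] by (intro summable_divide summable_add summable_mult)
  show summable: "summable (\<lambda>n. x n * w n)"
    by (rule summable_comparison_test'[OF summable_amgm[of 1]]) (use x w amgm[of 1] in auto)
  show "(\<Sum>n. x n * w n) \<le> M * T"
  proof (cases "M = 0")
    case True
    hence "(\<lambda>n. (x n)^2 * w n) = (\<lambda>n. 0)"
      using sq_le suminf_eq_zero_iff[OF summable_sq] suminf_nonneg[OF summable_sq] x w by fastforce
    hence "(\<lambda>n. x n * w n) = (\<lambda>n. 0)" by (metis mult_eq_0_iff power_eq_0_iff)
    thus ?thesis using True by simp
  next
    case False
    with M have "(\<Sum>n. x n * w n) \<le> (\<Sum>n. ((x n)^2 * w n / M + M * w n) / 2)"
      using summable summable_amgm amgm by (intro suminf_le) auto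
    also have "\<dots> = ((\<Sum>n. (x n)^2 * w n) / M + M * T) / 2"
      by (intro sums_unique[symmetric] sums_divide sums_add sums_mult sums_w summable_sums summable_sq)
    also have "\<dots> \<le> M * T"
      using sq_le False M by (simp add: field_simps power2_eq_square)
    finally show ?thesis .
  qed
qed

lemma admissible_norm_coeff_0_le_1:
  assumes \<gamma>: "0 \<le> \<gamma>" "\<gamma> < 1" and adm: "admissible \<gamma> k h g a b"
  shows "norm (a 0) \<le> 1"
proof -
  have "a 0 = h 0"
    using adm sums_coeff_eq_higher_deriv[of a h 0] by (simp add: admissible_def)
  moreover have "(0::complex) \<in> Omega \<gamma>" using ball_subset_Omega[OF \<gamma>] by auto
  ultimately show ?thesis using adm by (simp add: admissible_def)
qed

lemma admissible_coeff_sum_le: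
  assumes \<gamma>: "0 \<le> \<gamma>" "\<gamma> < 1" and k: "0 \<le> k" and adm: "admissible \<gamma> k h g a b"
    and r: "0 \<le> r" "r < 1"
  defines "A \<equiv> (1 - (norm (a 0))^2) / (1 + \<gamma>)"
  shows "summable (\<lambda>n. (norm (a (Suc n)) + norm (b (Suc n))) * r ^ Suc n)"
    and "(\<Sum>n. (norm (a (Suc n)) + norm (b (Suc n))) * r ^ Suc n) \<le> (1 + k) * A * (r / (1 - r))"
proof -
  from adm have holh: "h holomorphic_on Omega \<gamma>" and holg: "g holomorphic_on Omega \<gamma>"
    and sums_h: "\<forall>z\<in>ball 0 1. (\<lambda>n. a n * z ^ n) sums h z"
    and sums_g: "\<forall>z\<in>ball 0 1. (\<lambda>n. b n * z ^ n) sums g z"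
    and bound: "\<forall>z\<in>Omega \<gamma>. norm (h z) \<le> 1"
    and deriv_le: "\<forall>z\<in>ball 0 1. norm (deriv g z) \<le> k * norm (deriv h z)"
    unfolding admissible_def by auto
  have holh1: "h holomorphic_on ball 0 1" and holg1: "g holomorphic_on ball 0 1"
    using holomorphic_on_subset[OF _ ball_subset_Omega[OF \<gamma>]] holh holg by blast+
  have A: "0 \<le> A"
    using admissible_norm_coeff_0_le_1[OF \<gamma> adm] \<gamma> by (simp add: A_def abs_square_le_1)
  have "a 0 = h 0" using sums_coeff_eq_higher_deriv[OF sums_h, of 0] by simp
  hence a_le: "norm (a (Suc n)) \<le> A" for n
    unfolding A_def sums_coeff_eq_higher_deriv[OF sums_h, of "Suc n"]
    by (simp only:) (rule Omega_coeff_bound[OF \<gamma> holh], use bound in auto)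
  have sums_T: "(\<lambda>n. r^(Suc n)) sums (r / (1 - r))"
    using sums_mult[OF geometric_sums, of r r] r by simp
  note summable_a_sq = summable_coeff_square[OF holh1 sums_h r] and summable_b_sq = summable_coeff_square[OF holg1 sums_g r]
  have "(\<Sum>n. (norm (a (Suc n)))^2 * r^(Suc n)) \<le> (\<Sum>n. A^2 * r^(Suc n))"
    using summable_a_sq sums_summable[OF sums_T] a_le r
    by (intro suminf_le summable_mult mult_right_mono power_mono) auto
  hence a_sq_sum_le: "(\<Sum>n. (norm (a (Suc n)))^2 * r^(Suc n)) \<le> A^2 * (r / (1 - r))"
    using sums_unique[OF sums_mult[OF sums_T, of "A^2"]] by simp
  have b_sq_sum_le: "(\<Sum>n. (norm (b (Suc n)))^2 * r^(Suc n)) \<le> (k * A)^2 * (r / (1 - r))"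
    using coeff_square_sum_le_if_deriv_le[OF holh1 holg1 sums_h sums_g deriv_le r]
      mult_left_mono[OF a_sq_sum_le, of "k^2"] by (simp add: power_mult_distrib)
  note a_sum_le = suminf_le_if_suminf_square_le[OF norm_ge_zero zero_le_power[OF r(1)] sums_T summable_a_sq a_sq_sum_le A]
  note b_sum_le = suminf_le_if_suminf_square_le[OF norm_ge_zero zero_le_power[OF r(1)] sums_T summable_b_sq b_sq_sum_le mult_nonneg_nonneg[OF k A]]
  have sums_ab: "(\<lambda>n. (norm (a (Suc n)) + norm (b (Suc n))) * r ^ Suc n)
      sums ((\<Sum>n. norm (a (Suc n)) * r^(Suc n)) + (\<Sum>n. norm (b (Suc n)) * r^(Suc n)))"
    using sums_add[OF summable_sums[OF a_sum_le(1)] summable_sums[OF b_sum_le(1)]] by (simp add: distrib_right)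
  thus "summable (\<lambda>n. (norm (a (Suc n)) + norm (b (Suc n))) * r ^ Suc n)"
    by (simp add: sums_iff)
  have "(\<Sum>n. norm (a (Suc n)) * r^(Suc n)) + (\<Sum>n. norm (b (Suc n)) * r^(Suc n))
      \<le> A * (r / (1 - r)) + k * A * (r / (1 - r))"
    using a_sum_le(2) b_sum_le(2) by (rule add_mono)
  thus "(\<Sum>n. (norm (a (Suc n)) + norm (b (Suc n))) * r ^ Suc n) \<le> (1 + k) * A * (r / (1 - r))"
    using sums_unique[OF sums_ab] by (simp add: algebra_simps add_divide_distrib)
qed

lemma bohr_ineq_if_admissible:
  assumes \<gamma>: "0 \<le> \<gamma>" "\<gamma> < 1" and k: "0 \<le> k" and adm: "admissible \<gamma> k h g a b"
    and r: "0 \<le> r" "r \<le> (1 + \<gamma>) / (2 + k + \<gamma>)"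
  shows "bohr_ineq a b r"
proof -
  have "(1 + \<gamma>) / (2 + k + \<gamma>) < 1" using \<gamma> k by (simp add: field_simps)
  hence r1: "r < 1" using r by linarith
  have D: "0 \<le> 1 - (norm (a 0))^2"
    using admissible_norm_coeff_0_le_1[OF \<gamma> adm] by (simp add: abs_square_le_1)
  have "(1 + k) * r \<le> (1 + \<gamma>) * (1 - r)" using r \<gamma> k by (simp add: field_simps)
  hence "(1 + k) * r / ((1 + \<gamma>) * (1 - r)) \<le> 1" using \<gamma> r1 by simp
  from mult_left_mono[OF this D]
  have "(1 + k) * ((1 - (norm (a 0))^2) / (1 + \<gamma>)) * (r / (1 - r)) \<le> 1 - (norm (a 0))^2"
    using \<gamma> r1 by (simp add: field_simps)
  thus ?thesis
    using admissible_coeff_sum_le[OF \<gamma> k adm r(1) r1] unfolding bohr_ineq_def by simp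
qed

section \<open>Sharpness of the radius\<close>

lemma bohr_ineq_mono:
  assumes "bohr_ineq a b r" "0 \<le> r'" "r' \<le> r"
  shows "bohr_ineq a b r'"
proof -
  let ?t = "\<lambda>r n. (norm (a (Suc n)) + norm (b (Suc n))) * r ^ Suc n"
  have le: "?t r' n \<le> ?t r n" for n
    using assms by (intro mult_left_mono power_mono) auto
  have "summable (?t r)" using assms(1) by (simp add: bohr_ineq_def)
  moreover from this have "summable (?t r')"
    by (rule summable_comparison_test'[where N = 0]) (use assms le in auto)
  ultimately show ?thesis
    using assms(1) suminf_le[OF le] unfolding bohr_ineq_def by fastforce
qed

text \<open>The extremal function \<open>(\<alpha>(1 + \<gamma>) - (1 + \<alpha>\<gamma>) z) / ((1 + \<gamma>) - (\<gamma> + \<alpha>) z)\<close>,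
  written so that its Taylor coefficients are visible.\<close>
definition extremal_fun :: "real \<Rightarrow> real \<Rightarrow> complex \<Rightarrow> complex" where
  "extremal_fun \<gamma> \<alpha> z =
     of_real \<alpha> - of_real ((1 - \<alpha>^2) / (1 + \<gamma>)) * z / (1 - of_real ((\<gamma> + \<alpha>) / (1 + \<gamma>)) * z)"

definition extremal_coeff :: "real \<Rightarrow> real \<Rightarrow> nat \<Rightarrow> complex" where
  "extremal_coeff \<gamma> \<alpha> n =
     (if n = 0 then of_real \<alpha> else - of_real ((1 - \<alpha>^2) / (1 + \<gamma>) * ((\<gamma> + \<alpha>) / (1 + \<gamma>))^(n - 1)))"

lemma extremal_denominator_nonzero:
  assumes \<gamma>: "0 \<le> \<gamma>" "\<gamma> < 1" and \<alpha>: "0 \<le> \<alpha>" "\<alpha> < 1" and z: "z \<in> Omega \<gamma>"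
  shows "1 - of_real ((\<gamma> + \<alpha>) / (1 + \<gamma>)) * z \<noteq> 0"
proof -
  define q where "q = (\<gamma> + \<alpha>) / (1 + \<gamma>)"
  have "1 - of_real q * z \<noteq> 0"
  proof
    assume e: "1 - of_real q * z = 0"
    hence q: "q \<noteq> 0" by auto
    hence "z = of_real (1 / q)" using e by (simp add: field_simps)
    moreover have "1 / q \<ge> 1" using q \<gamma> \<alpha> by (simp add: q_def field_simps)
    ultimately show False using of_real_notin_Omega[OF \<gamma>, of "1 / q"] z by simp
  qed
  thus ?thesis by (simp add: q_def)
qed

text \<open>The two squared norms differ by \<open>(1 - \<alpha>\<^sup>2)(1 + \<gamma>)\<close> times a quadratic in \<open>z\<close> that is
  positive exactly on \<open>\<Omega>\<^sub>\<gamma>\<close>.\<close>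
lemma extremal_numerator_le_denominator:
  fixes z :: complex
  assumes \<gamma>: "0 \<le> \<gamma>" "\<gamma> < 1" and \<alpha>: "0 \<le> \<alpha>" "\<alpha> < 1" and z: "z \<in> Omega \<gamma>"
  shows "norm (of_real (\<alpha> * (1 + \<gamma>)) - of_real (\<alpha> * \<gamma> + 1) * z)
           \<le> norm (of_real (1 + \<gamma>) - of_real (\<gamma> + \<alpha>) * z)"
proof -
  obtain x y where zxy: "z = Complex x y" by (cases z)
  have "norm (- complex_of_real (\<gamma> / (1 - \<gamma>)) - z) < 1 / (1 - \<gamma>)"
    using z unfolding Omega_def mem_ball dist_norm .
  hence "(norm (- complex_of_real (\<gamma> / (1 - \<gamma>)) - z))^2 < (1 / (1 - \<gamma>))^2"
    by (rule power_strict_mono) auto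
  hence "(\<gamma> / (1 - \<gamma>) + x)^2 + y^2 < (1 / (1 - \<gamma>))^2"
    unfolding zxy by (simp only: cmod_power2) (simp add: power2_eq_square algebra_simps)
  hence "(1 - \<gamma>)^2 * ((\<gamma> / (1 - \<gamma>) + x)^2 + y^2) < (1 - \<gamma>)^2 * (1 / (1 - \<gamma>))^2"
    by (rule mult_strict_left_mono) (use \<gamma> in simp)
  moreover have "(1 - \<gamma>)^2 * ((\<gamma> / (1 - \<gamma>) + x)^2 + y^2) = (\<gamma> + (1 - \<gamma>) * x)^2 + (1 - \<gamma>)^2 * y^2"
  proof -
    have d: "1 - \<gamma> \<noteq> 0" using \<gamma> by simp
    have e: "\<gamma> / (1 - \<gamma>) + x = (\<gamma> + (1 - \<gamma>) * x) / (1 - \<gamma>)" using d by (simp add: field_simps)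
    show ?thesis unfolding e power_divide distrib_left using d by simp
  qed
  moreover have "(1 - \<gamma>)^2 * (1 / (1 - \<gamma>))^2 = 1" using \<gamma> by (simp add: power_divide)
  ultimately have "(\<gamma> + (1 - \<gamma>) * x)^2 + (1 - \<gamma>)^2 * y^2 < 1" by simp
  hence "(1 - \<gamma>) * ((1 + \<gamma>) - 2 * \<gamma> * x - (1 - \<gamma>) * (x^2 + y^2)) > 0"
    by (simp add: power2_eq_square algebra_simps)
  hence W: "(1 + \<gamma>) - 2 * \<gamma> * x - (1 - \<gamma>) * (x^2 + y^2) > 0"
    using \<gamma> by (simp add: zero_less_mult_iff)
  have "(norm (of_real (1 + \<gamma>) - of_real (\<gamma> + \<alpha>) * z))^2
        - (norm (of_real (\<alpha> * (1 + \<gamma>)) - of_real (\<alpha> * \<gamma> + 1) * z))^2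
      = (1 - \<alpha>^2) * (1 + \<gamma>) * ((1 + \<gamma>) - 2 * \<gamma> * x - (1 - \<gamma>) * (x^2 + y^2))"
    unfolding zxy by (simp only: cmod_power2) (simp add: power2_eq_square algebra_simps)
  moreover have "(1 - \<alpha>^2) * (1 + \<gamma>) * ((1 + \<gamma>) - 2 * \<gamma> * x - (1 - \<gamma>) * (x^2 + y^2)) \<ge> 0"
    using \<gamma> W \<alpha> by (intro mult_nonneg_nonneg) (simp_all add: abs_square_le_1)
  ultimately have "(norm (of_real (\<alpha> * (1 + \<gamma>)) - of_real (\<alpha> * \<gamma> + 1) * z))^2
      \<le> (norm (of_real (1 + \<gamma>) - of_real (\<gamma> + \<alpha>) * z))^2" by linarith
  thus ?thesis by (rule power2_le_imp_le) simp
qed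

lemma norm_extremal_fun_le_1:
  assumes \<gamma>: "0 \<le> \<gamma>" "\<gamma> < 1" and \<alpha>: "0 \<le> \<alpha>" "\<alpha> < 1" and z: "z \<in> Omega \<gamma>"
  shows "norm (extremal_fun \<gamma> \<alpha> z) \<le> 1"
proof -
  define q where "q = (\<gamma> + \<alpha>) / (1 + \<gamma>)"
  define c where "c = (1 - \<alpha>^2) / (1 + \<gamma>)"
  define D where "D = 1 - of_real q * z"
  have D: "D \<noteq> 0" using extremal_denominator_nonzero[OF \<gamma> \<alpha> z] by (simp add: D_def q_def)
  have one_plus: "of_real (1 + \<gamma>) \<noteq> (0::complex)" using \<gamma> by (simp only: of_real_eq_0_iff)
  have q: "(1 + \<gamma>) * q = \<gamma> + \<alpha>" and c: "(1 + \<gamma>) * c = 1 - \<alpha>^2"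
    using \<gamma> by (simp_all add: q_def c_def)
  have "of_real (1 + \<gamma>) * D = of_real (1 + \<gamma>) - of_real ((1 + \<gamma>) * q) * z"
    by (simp add: D_def algebra_simps)
  also have "\<dots> = of_real (1 + \<gamma>) - of_real (\<gamma> + \<alpha>) * z" by (simp only: q)
  finally have Dn: "of_real (1 + \<gamma>) * D = of_real (1 + \<gamma>) - of_real (\<gamma> + \<alpha>) * z" .
  have "\<alpha> * \<gamma> + 1 = \<alpha> * ((1 + \<gamma>) * q) + (1 + \<gamma>) * c"
    unfolding q c by (simp add: algebra_simps power2_eq_square)
  hence Nn: "of_real (1 + \<gamma>) * (of_real \<alpha> * D - of_real c * z)
      = of_real (\<alpha> * (1 + \<gamma>)) - of_real (\<alpha> * \<gamma> + 1) * z"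
    by (simp add: D_def algebra_simps)
  have "extremal_fun \<gamma> \<alpha> z = of_real \<alpha> - of_real c * z / D"
    by (simp add: extremal_fun_def D_def q_def c_def)
  also have "\<dots> = (of_real \<alpha> * D - of_real c * z) / D"
    using D by (simp add: field_simps)
  also have "\<dots> = (of_real (1 + \<gamma>) * (of_real \<alpha> * D - of_real c * z)) / (of_real (1 + \<gamma>) * D)"
    using one_plus by simp
  finally show ?thesis
    unfolding Nn Dn using extremal_numerator_le_denominator[OF \<gamma> \<alpha> z] Dn D one_plus
    by (simp add: norm_divide divide_le_eq_1)
qed

lemma extremal_coeff_Suc:
  "extremal_coeff \<gamma> \<alpha> (Suc n) = - of_real ((1 - \<alpha>^2) / (1 + \<gamma>) * ((\<gamma> + \<alpha>) / (1 + \<gamma>))^n)"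
  by (simp add: extremal_coeff_def)

lemma extremal_fun_sums:
  assumes \<gamma>: "0 \<le> \<gamma>" "\<gamma> < 1" and \<alpha>: "0 \<le> \<alpha>" "\<alpha> < 1" and z: "z \<in> ball 0 1"
  shows "(\<lambda>n. extremal_coeff \<gamma> \<alpha> n * z^n) sums extremal_fun \<gamma> \<alpha> z"
proof -
  define q where "q = (\<gamma> + \<alpha>) / (1 + \<gamma>)"
  define c where "c = (1 - \<alpha>^2) / (1 + \<gamma>)"
  have q: "0 \<le> q" "q < 1" using \<gamma> \<alpha> by (auto simp: q_def field_simps)
  have "norm (of_real q * z) = q * norm z" using q by (simp add: norm_mult)
  also have "\<dots> \<le> q" using q z by (intro mult_left_le) auto
  finally have "norm (of_real q * z) < 1" using q by simp
  from sums_mult[OF geometric_sums[OF this], of "- of_real c * z"]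
  have "(\<lambda>n. extremal_coeff \<gamma> \<alpha> (Suc n) * z^(Suc n)) sums (- of_real c * z / (1 - of_real q * z))"
    unfolding extremal_coeff_Suc q_def[symmetric] c_def[symmetric]
    by (simp add: power_mult_distrib mult_ac)
  from sums_Suc[OF this] show ?thesis
    by (simp add: extremal_coeff_def extremal_fun_def q_def c_def)
qed

lemma extremal_admissible:
  assumes \<gamma>: "0 \<le> \<gamma>" "\<gamma> < 1" and k: "0 \<le> k" and \<alpha>: "0 \<le> \<alpha>" "\<alpha> < 1"
  shows "admissible \<gamma> k (extremal_fun \<gamma> \<alpha>) (\<lambda>z. of_real k * (extremal_fun \<gamma> \<alpha> z - of_real \<alpha>))
           (extremal_coeff \<gamma> \<alpha>) (\<lambda>n. if n = 0 then 0 else of_real k * extremal_coeff \<gamma> \<alpha> n)"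
proof -
  let ?h = "extremal_fun \<gamma> \<alpha>" and ?g = "\<lambda>z. of_real k * (extremal_fun \<gamma> \<alpha> z - of_real \<alpha>)"
  have holh: "?h holomorphic_on Omega \<gamma>"
    unfolding extremal_fun_def[abs_def] using extremal_denominator_nonzero[OF \<gamma> \<alpha>]
    by (intro holomorphic_intros) auto
  hence holg: "?g holomorphic_on Omega \<gamma>" by (intro holomorphic_intros)
  have sums_g: "(\<lambda>n. (if n = 0 then 0 else of_real k * extremal_coeff \<gamma> \<alpha> n) * z^n) sums ?g z"
    if "z \<in> ball 0 1" for z
  proof -
    have "(\<lambda>n. of_real k * (extremal_coeff \<gamma> \<alpha> n * z^n) - (if n = 0 then of_real k * of_real \<alpha> else 0))
        sums (of_real k * extremal_fun \<gamma> \<alpha> z - of_real k * of_real \<alpha>)"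
      by (intro sums_diff sums_mult extremal_fun_sums[OF \<gamma> \<alpha> that] sums_single)
    moreover have "(\<lambda>n. of_real k * (extremal_coeff \<gamma> \<alpha> n * z^n) - (if n = 0 then of_real k * of_real \<alpha> else 0))
        = (\<lambda>n. (if n = 0 then 0 else of_real k * extremal_coeff \<gamma> \<alpha> n) * z^n)"
      by (auto simp: extremal_coeff_def)
    ultimately show ?thesis by (simp add: algebra_simps)
  qed
  have "deriv ?g z = of_real k * deriv ?h z" if "z \<in> ball 0 1" for z
  proof -
    have "z \<in> Omega \<gamma>" using ball_subset_Omega[OF \<gamma>] that by blast
    hence "(?h has_field_derivative deriv ?h z) (at z)"
      by (intro holomorphic_derivI[OF holh]) (auto simp: Omega_def)
    thus ?thesis by (auto intro!: DERIV_imp_deriv derivative_eq_intros)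
  qed
  thus ?thesis
    unfolding admissible_def
    using holh holg extremal_fun_sums[OF \<gamma> \<alpha>] sums_g norm_extremal_fun_le_1[OF \<gamma> \<alpha>] k
    by (simp add: norm_mult)
qed

lemma not_bohr_ineq_extremal:
  assumes \<gamma>: "0 \<le> \<gamma>" "\<gamma> < 1" and k: "0 \<le> k" and \<alpha>: "0 \<le> \<alpha>" "\<alpha> < 1"
    and r: "0 < r" "r < 1" "1 + \<gamma> < r * (1 + k + \<gamma> + \<alpha>)"
  shows "\<not> bohr_ineq (extremal_coeff \<gamma> \<alpha>) (\<lambda>n. if n = 0 then 0 else of_real k * extremal_coeff \<gamma> \<alpha> n) r"
proof
  define q where "q = (\<gamma> + \<alpha>) / (1 + \<gamma>)"
  define c where "c = (1 - \<alpha>^2) / (1 + \<gamma>)"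
  have q: "0 \<le> q" "q < 1" and c: "0 < c"
    using \<gamma> \<alpha> by (auto simp: q_def c_def field_simps abs_square_less_1)
  have qr: "q * r < 1" using q r mult_strict_mono[of q 1 r 1] by simp
  have summand: "(norm (extremal_coeff \<gamma> \<alpha> (Suc n)) + norm (of_real k * extremal_coeff \<gamma> \<alpha> (Suc n))) * r ^ Suc n
      = (1 + k) * c * r * (q * r)^n" for n
    unfolding extremal_coeff_Suc q_def[symmetric] c_def[symmetric] norm_minus_cancel norm_mult norm_of_real
    using q c k r by (simp add: abs_mult power_mult_distrib algebra_simps)
  have "(\<lambda>n. (norm (extremal_coeff \<gamma> \<alpha> (Suc n)) + norm (of_real k * extremal_coeff \<gamma> \<alpha> (Suc n)))
      * r ^ Suc n) sums ((1 + k) * c * r * (1 / (1 - q * r)))"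
    unfolding summand using sums_mult[OF geometric_sums[of "q * r"], of "(1 + k) * c * r"] q qr r by simp
  moreover assume "bohr_ineq (extremal_coeff \<gamma> \<alpha>) (\<lambda>n. if n = 0 then 0 else of_real k * extremal_coeff \<gamma> \<alpha> n) r"
  ultimately have bohr_sum: "\<alpha>^2 + (1 + k) * c * r / (1 - q * r) \<le> 1"
    using \<alpha> by (simp add: bohr_ineq_def sums_iff extremal_coeff_def)
  have "(1 + \<gamma>) * (1 - q * r) = 1 + \<gamma> - (\<gamma> + \<alpha>) * r"
    using \<gamma> by (simp add: q_def field_simps)
  hence "(1 + \<gamma>) * (1 - q * r) < (1 + k) * r" using r(3) by (simp add: algebra_simps)
  from mult_strict_right_mono[OF this c]
  have "(1 + \<gamma>) * c * (1 - q * r) < (1 + k) * c * r" by (simp add: mult_ac)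
  hence "(1 + \<gamma>) * c < (1 + k) * c * r / (1 - q * r)" using qr by (simp add: pos_less_divide_eq)
  moreover have "(1 + \<gamma>) * c = 1 - \<alpha>^2" using \<gamma> by (simp add: c_def)
  ultimately show False using bohr_sum by linarith
qed

lemma bohr_radius_sharp:
  assumes \<gamma>: "0 \<le> \<gamma>" "\<gamma> < 1" and k: "0 \<le> k" and r: "(1 + \<gamma>) / (2 + k + \<gamma>) < r"
  shows "\<exists>h g a b. admissible \<gamma> k h g a b \<and> \<not> bohr_ineq a b r"
proof -
  define R where "R = (1 + \<gamma>) / (2 + k + \<gamma>)"
  have R: "0 < R" "R < 1" "R < r" using \<gamma> k r by (simp_all add: R_def field_simps)
  define r' where "r' = min r ((R + 1) / 2)"
  have r': "R < r'" "r' < 1" "r' \<le> r" using R by (auto simp: r'_def min_def)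
  define L where "L = (1 + \<gamma>) / r' - (1 + k + \<gamma>)"
  have "(1 + \<gamma>) / r' < (1 + \<gamma>) / R"
    using \<gamma> R r' by (intro divide_strict_left_mono) auto
  also have "(1 + \<gamma>) / R = 2 + k + \<gamma>" using \<gamma> k by (simp add: R_def)
  finally have "L < 1" by (simp add: L_def)
  \<comment> \<open>any \<open>\<alpha> \<in> (L, 1)\<close> makes the extremal Bohr sum exceed \<open>1\<close> at \<open>r'\<close>\<close>
  define \<alpha> where "\<alpha> = (max L 0 + 1) / 2"
  have \<alpha>: "0 \<le> \<alpha>" "\<alpha> < 1" "L < \<alpha>" using \<open>L < 1\<close> by (auto simp: \<alpha>_def)
  have "1 + \<gamma> < r' * (1 + k + \<gamma> + \<alpha>)" using \<alpha>(3) R r' by (simp add: L_def field_simps)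
  hence "\<not> bohr_ineq (extremal_coeff \<gamma> \<alpha>) (\<lambda>n. if n = 0 then 0 else of_real k * extremal_coeff \<gamma> \<alpha> n) r'"
    using R r' by (intro not_bohr_ineq_extremal[OF \<gamma> k \<alpha>(1,2)]) auto
  hence "\<not> bohr_ineq (extremal_coeff \<gamma> \<alpha>) (\<lambda>n. if n = 0 then 0 else of_real k * extremal_coeff \<gamma> \<alpha> n) r"
    using bohr_ineq_mono R r' by (meson le_less_trans less_imp_le)
  thus ?thesis using extremal_admissible[OF \<gamma> k \<alpha>(1,2)] by blast
qed

theorem corollary4p2:
  fixes \<gamma> k :: real
  assumes "0 \<le> \<gamma>" "\<gamma> < 1" "0 \<le> k" "k < 1"
  shows "(\<forall>h g a b r. admissible \<gamma> k h g a b \<longrightarrow> 0 \<le> r \<longrightarrow> r \<le> (1 + \<gamma>) / (2 + k + \<gamma>)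
            \<longrightarrow> bohr_ineq a b r)
       \<and> (\<forall>r. (1 + \<gamma>) / (2 + k + \<gamma>) < r \<longrightarrow>
            (\<exists>h g a b. admissible \<gamma> k h g a b \<and> \<not> bohr_ineq a b r))"
  using bohr_ineq_if_admissible[OF assms(1,2,3)] bohr_radius_sharp[OF assms(1,2,3)] by blast

end
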